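(* Let $d\ge1$, let $y=(y_S)_{S\in\mathcal{V}_{n,2d}}$ be a vector over $\mathbb{F}_q$, and let $0\le e\le d-1$ with $r_e=r_{e+1}$. Let $\mathcal{I}\subseteq\mathcal{V}_{n,e}$ be such that the vectors $\{\mathbf{c}_e(B):B\in\mathcal{I}\}$ form a basis of $C_e$. Then for every $i\in[n]$ there is a linear map $T_i:C_e\to C_e$ with $T_i\mathbf{c}_e(B)=\mathbf{c}_e(B\cup\{i\})$ for every $B\in\mathcal{I}$. Moreover, for every $A\in\mathcal{V}_{n,e+1}$ and every $i\in[n]$, the vector $\mathbf{c}_e(A)$ lies in $C_e$ and $T_i\mathbf{c}_e(A)=\mathbf{c}_e(A\cup\{i\})$.
   Context: $\mathbb{F}_q$ is a finite field. $\mathcal{V}_{n,j}:=\{S\subseteq\{1,\dots,n\}:0\le|S|\le j\}$ (including $\emptyset$). For $0\le e\le d$, $H_e(y)$ is the matrix with rows and columns indexed by $\mathcal{V}_{n,e}$ and $(S,T)$ entry $y_{S\cup T}$; $r_e:=\operatorname{rank}H_e(y)$; $C_e$ is the column space of $H_e(y)$. For $A\subseteq[n]$ with $|A|\le2d-e$, the truncated column is $\mathbf{c}_e(A):=(y_{R\cup A})_{R\in\mathcal{V}_{n,e}}\in\mathbb{F}_q^{\mathcal{V}_{n,e}}$. *)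

theory Defs
  imports Complex_Main "HOL-Library.Function_Algebras"
begin

definition scl :: "'a::field \<Rightarrow> (nat set \<Rightarrow> 'a) \<Rightarrow> (nat set \<Rightarrow> 'a)" where
  "scl c v = (\<lambda>R. c * v R)"

definition Vset :: "nat \<Rightarrow> nat \<Rightarrow> nat set set" where
  "Vset n j = {S. S \<subseteq> {1..n} \<and> card S \<le> j}"

text \<open>Truncated column c_e(A) = (y_(R union A)) for R in V_{n,e}; zero outside V_{n,e}.
  Note that column T of H_e(y) is exactly colvec n e y T.\<close>
definition colvec :: "nat \<Rightarrow> nat \<Rightarrow> (nat set \<Rightarrow> 'a::field) \<Rightarrow> nat set \<Rightarrow> (nat set \<Rightarrow> 'a)" where
  "colvec n e y A = (\<lambda>R. if R \<in> Vset n e then y (R \<union> A) else 0)"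

definition colspace :: "nat \<Rightarrow> nat \<Rightarrow> (nat set \<Rightarrow> 'a::field) \<Rightarrow> (nat set \<Rightarrow> 'a) set" where
  "colspace n e y = module.span scl (colvec n e y ` Vset n e)"

definition hrank :: "nat \<Rightarrow> nat \<Rightarrow> (nat set \<Rightarrow> 'a::field) \<Rightarrow> nat" where
  "hrank n e y = vector_space.dim scl (colspace n e y)"

end

theory Submission
  imports Defs
begin

text \<open>The restriction to \<open>V\<^sub>n\<^sub>,\<^sub>e\<close> maps \<open>c\<^sub>e\<^sub>+\<^sub>1(A)\<close> to \<open>c\<^sub>e(A)\<close>. Flatness \<open>r\<^sub>e = r\<^sub>e\<^sub>+\<^sub>1\<close> forces the
  lifted basis vectors \<open>c\<^sub>e\<^sub>+\<^sub>1(B)\<close>, \<open>B \<in> I\<close>, which are independent because their restrictions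
  are, to span \<open>C\<^sub>e\<^sub>+\<^sub>1\<close>; hence the restriction is a linear bijection \<open>C\<^sub>e\<^sub>+\<^sub>1 \<rightarrow> C\<^sub>e\<close>. This already
  puts every \<open>c\<^sub>e(A)\<close> with \<open>|A| \<le> e + 1\<close> into \<open>C\<^sub>e\<close>, and \<open>T\<^sub>i\<close> is obtained by lifting a vector of \<open>C\<^sub>e\<close>
  to \<open>C\<^sub>e\<^sub>+\<^sub>1\<close>, shifting the index set by \<open>i\<close> (\<open>R \<mapsto> R \<union> {i}\<close>), and restricting back.\<close>

lemma (in vector_space) card_le_dim_span_if_independent:
  assumes "finite S" "independent B" "B \<subseteq> span S"
  shows "card B \<le> dim (span S)"
proof -
  obtain J where J: "J \<subseteq> span S" "independent J" "span S \<subseteq> span J" "card J = dim (span S)"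
    by (rule basis_exists)
  then have "finite J"
    using independent_span_bound[OF assms(1)] by blast
  with J assms(2,3) show ?thesis
    using independent_span_bound[of J B] by auto
qed

lemma (in vector_space) span_eq_if_independent_card_ge_dim:
  assumes "finite S" "independent B" "B \<subseteq> span S" "dim (span S) \<le> card B"
  shows "span B = span S"
proof
  show "span B \<subseteq> span S"
    using assms(3) by (rule span_minimal[OF _ subspace_span])
  have "finite B"
    using independent_span_bound[OF assms(1,2,3)] by blast
  show "span S \<subseteq> span B"
  proof
    fix a assume a: "a \<in> span S"
    show "a \<in> span B"
    proof (rule ccontr)
      assume "a \<notin> span B"
      then have "independent (insert a B)" "a \<notin> B"
        using assms(2) independent_insertI span_base by blast+
      then have "Suc (card B) \<le> dim (span S)"
        using card_le_dim_span_if_independent[OF assms(1), of "insert a B"] a assms(3) \<open>finite B\<close>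
        by simp
      with assms(4) show False by simp
    qed
  qed
qed

lemma (in Vector_Spaces.linear) independent_if_independent_image:
  assumes "vs2.independent (f ` B)" "inj_on f B"
  shows "vs1.independent B"
proof
  assume "vs1.dependent B"
  then obtain a where a: "a \<in> B" "a \<in> vs1.span (B - {a})"
    by (auto simp: vs1.dependent_def)
  then have "f a \<in> vs2.span (f ` (B - {a}))"
    using span_image by blast
  moreover have "f ` (B - {a}) = f ` B - {f a}"
    using assms(2) a(1) by (auto simp: inj_on_def)
  ultimately have "vs2.dependent (f ` B)"
    using a(1) by (auto simp: vs2.dependent_def)
  with assms(1) show False by simp
qed

interpretation scl: vector_space "scl :: 'a::field \<Rightarrow> (nat set \<Rightarrow> 'a) \<Rightarrow> nat set \<Rightarrow> 'a"
  by unfold_locales (auto simp: scl_def fun_eq_iff algebra_simps)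

definition trunc_vec :: "nat set set \<Rightarrow> (nat set \<Rightarrow> 'a::field) \<Rightarrow> nat set \<Rightarrow> 'a" where
  "trunc_vec V v = (\<lambda>R. if R \<in> V then v R else 0)"

definition shift_vec :: "nat \<Rightarrow> (nat set \<Rightarrow> 'a::field) \<Rightarrow> nat set \<Rightarrow> 'a" where
  "shift_vec i v = (\<lambda>R. v (R \<union> {i}))"

lemma linear_trunc_vec: "Vector_Spaces.linear scl scl (trunc_vec V :: (nat set \<Rightarrow> 'a::field) \<Rightarrow> _)"
  by (auto simp: Vector_Spaces.linear_iff scl.vector_space_axioms trunc_vec_def scl_def fun_eq_iff)

lemma linear_shift_vec: "Vector_Spaces.linear scl scl (shift_vec i :: (nat set \<Rightarrow> 'a::field) \<Rightarrow> _)"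
  by (auto simp: Vector_Spaces.linear_iff scl.vector_space_axioms shift_vec_def scl_def fun_eq_iff)

lemma finite_Vset: "finite (Vset n j)"
  by (rule finite_subset[of _ "Pow {1..n}"]) (auto simp: Vset_def)

lemma Vset_mono: "j \<le> k \<Longrightarrow> Vset n j \<subseteq> Vset n k"
  by (auto simp: Vset_def)

lemma Un_singleton_in_Vset_Suc:
  assumes "B \<in> Vset n e" "i \<in> {1..n}"
  shows "B \<union> {i} \<in> Vset n (Suc e)"
proof -
  have "finite B"
    using assms(1) finite_Vset finite_subset by (auto simp: Vset_def)
  with assms show ?thesis
    by (auto simp: Vset_def card_insert_if)
qed

lemma colvec_in_colspace: "A \<in> Vset n e \<Longrightarrow> colvec n e y A \<in> colspace n e y"
  by (auto simp: colspace_def intro: scl.span_base)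

lemma trunc_colvec: "e \<le> k \<Longrightarrow> trunc_vec (Vset n e) (colvec n k y A) = colvec n e y A"
  using Vset_mono[of e k n] by (auto simp: trunc_vec_def colvec_def fun_eq_iff)

lemma trunc_shift_colvec:
  assumes "i \<in> {1..n}"
  shows "trunc_vec (Vset n e) (shift_vec i (colvec n (Suc e) y A)) = colvec n e y (A \<union> {i})"
  using Un_singleton_in_Vset_Suc[OF _ assms]
  by (auto simp: trunc_vec_def shift_vec_def colvec_def fun_eq_iff Un_ac)

locale flat_basis =
  fixes n e :: nat and y :: "nat set \<Rightarrow> 'a::field" and I :: "nat set set"
  assumes flat: "hrank n e y = hrank n (Suc e) y"
    and basis_index: "I \<subseteq> Vset n e"
    and inj_basis: "inj_on (colvec n e y) I"
    and independent_basis: "scl.independent (colvec n e y ` I)"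
    and span_basis: "scl.span (colvec n e y ` I) = colspace n e y"
begin

lemma trunc_image_lifted_basis:
  "trunc_vec (Vset n e) ` colvec n (Suc e) y ` I = colvec n e y ` I"
  by (simp add: image_image trunc_colvec)

lemma inj_on_trunc_lifted_basis: "inj_on (trunc_vec (Vset n e)) (colvec n (Suc e) y ` I)"
  by (rule inj_on_imageI) (simp add: comp_def trunc_colvec inj_basis)

lemma inj_on_lifted_basis: "inj_on (colvec n (Suc e) y) I"
  by (rule inj_on_imageI2[of "trunc_vec (Vset n e)"]) (simp add: comp_def trunc_colvec inj_basis)

lemma independent_lifted_basis: "scl.independent (colvec n (Suc e) y ` I)"
proof -
  interpret P: Vector_Spaces.linear scl scl "trunc_vec (Vset n e)"
    by (rule linear_trunc_vec)
  show ?thesis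
    using P.independent_if_independent_image
      trunc_image_lifted_basis inj_on_trunc_lifted_basis independent_basis
    by metis
qed

lemma colspace_Suc_eq_span_lifted_basis:
  "colspace n (Suc e) y = scl.span (colvec n (Suc e) y ` I)"
proof -
  have "scl.dim (colspace n (Suc e) y) = card I"
    using flat span_basis scl.dim_span_eq_card_independent[OF independent_basis]
      card_image[OF inj_basis]
    by (simp add: hrank_def)
  also have "\<dots> = card (colvec n (Suc e) y ` I)"
    by (simp add: card_image inj_on_lifted_basis)
  finally have "scl.dim (colspace n (Suc e) y) \<le> card (colvec n (Suc e) y ` I)"
    by simp
  moreover have "colvec n (Suc e) y ` I \<subseteq> colspace n (Suc e) y"
    using basis_index Vset_mono[of e "Suc e" n] by (auto intro: colvec_in_colspace)
  ultimately show ?thesis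
    using scl.span_eq_if_independent_card_ge_dim[OF finite_imageI[OF finite_Vset]
        independent_lifted_basis]
    by (simp add: colspace_def)
qed

lemma bij_betw_trunc_colspace:
  "bij_betw (trunc_vec (Vset n e)) (colspace n (Suc e) y) (colspace n e y)"
proof -
  interpret P: Vector_Spaces.linear scl scl "trunc_vec (Vset n e)"
    by (rule linear_trunc_vec)
  show ?thesis
    unfolding bij_betw_def colspace_Suc_eq_span_lifted_basis
    using P.inj_on_span_independent_image P.span_image trunc_image_lifted_basis
      inj_on_trunc_lifted_basis independent_basis span_basis
    by metis
qed

lemma colvec_in_colspace_Vset_Suc:
  assumes "A \<in> Vset n (Suc e)"
  shows "colvec n e y A \<in> colspace n e y"
  using bij_betwE[OF bij_betw_trunc_colspace] colvec_in_colspace[OF assms] trunc_colvec[of e "Suc e"]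
  by (metis le_SucI order_refl)

lemma linear_lift_exists:
  obtains g where "Vector_Spaces.linear scl scl g"
    "\<And>v. v \<in> colspace n (Suc e) y \<Longrightarrow> g (trunc_vec (Vset n e) v) = v"
proof -
  interpret scl_pair: vector_space_pair "scl :: 'a \<Rightarrow> _" "scl :: 'a \<Rightarrow> _" ..
  have "inj_on (trunc_vec (Vset n e)) (colspace n (Suc e) y)"
    using bij_betw_trunc_colspace by (rule bij_betw_imp_inj_on)
  then show thesis
    using that scl_pair.linear_inj_on_left_inverse[OF linear_trunc_vec,
        where S = "colvec n (Suc e) y ` I"]
    by (metis colspace_Suc_eq_span_lifted_basis)
qed

lemma shift_operator_exists:
  assumes "i \<in> {1..n}"
  obtains T where "Vector_Spaces.linear scl scl T" "T ` colspace n e y \<subseteq> colspace n e y"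
    "\<And>A. A \<in> Vset n (Suc e) \<Longrightarrow> T (colvec n e y A) = colvec n e y (A \<union> {i})"
proof -
  obtain g where g: "Vector_Spaces.linear scl scl g"
    "\<And>v. v \<in> colspace n (Suc e) y \<Longrightarrow> g (trunc_vec (Vset n e) v) = v"
    using linear_lift_exists by blast
  define T where "T = trunc_vec (Vset n e) \<circ> shift_vec i \<circ> g"
  have linear_T: "Vector_Spaces.linear scl scl T"
    unfolding T_def
    by (rule Vector_Spaces.linear_compose[OF g(1)
          Vector_Spaces.linear_compose[OF linear_shift_vec linear_trunc_vec]])
  have T_colvec: "T (colvec n e y A) = colvec n e y (A \<union> {i})" if "A \<in> Vset n (Suc e)" for A
    using g(2)[OF colvec_in_colspace[OF that]] trunc_colvec[of e "Suc e"]
      trunc_shift_colvec[OF assms]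
    by (metis T_def comp_apply le_SucI order_refl)
  interpret T: Vector_Spaces.linear scl scl T
    by (rule linear_T)
  have "T (colvec n e y B) \<in> colspace n e y" if "B \<in> I" for B
  proof -
    have "B \<in> Vset n e"
      using that basis_index by blast
    then show ?thesis
      using T_colvec Vset_mono[of e "Suc e" n] Un_singleton_in_Vset_Suc[OF _ assms]
        colvec_in_colspace_Vset_Suc
      by auto
  qed
  then have "T ` colvec n e y ` I \<subseteq> colspace n e y"
    by blast
  then have "T ` colspace n e y \<subseteq> colspace n e y"
    using T.span_image scl.span_minimal span_basis scl.subspace_span by metis
  with linear_T T_colvec show thesis
    using that by blast
qed

end

theorem lemma4p4:
  fixes y :: "nat set \<Rightarrow> 'a::{field,finite}"
    and n d e :: nat and I :: "nat set set"
  assumes "d \<ge> 1"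
    and "e \<le> d - 1"
    and "hrank n e y = hrank n (e + 1) y"
    and "I \<subseteq> Vset n e"
    and "inj_on (colvec n e y) I"
    and "\<not> module.dependent scl (colvec n e y ` I)"
    and "module.span scl (colvec n e y ` I) = colspace n e y"
  shows "(\<forall>A \<in> Vset n (e + 1). colvec n e y A \<in> colspace n e y) \<and>
    (\<forall>i \<in> {1..n}. \<exists>T :: (nat set \<Rightarrow> 'a) \<Rightarrow> (nat set \<Rightarrow> 'a).
        (\<forall>v \<in> colspace n e y. T v \<in> colspace n e y) \<and>
        (\<forall>u \<in> colspace n e y. \<forall>v \<in> colspace n e y. T (u + v) = T u + T v) \<and>
        (\<forall>c. \<forall>v \<in> colspace n e y. T (scl c v) = scl c (T v)) \<and>
        (\<forall>B \<in> I. T (colvec n e y B) = colvec n e y (B \<union> {i})) \<and>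
        (\<forall>A \<in> Vset n (e + 1). T (colvec n e y A) = colvec n e y (A \<union> {i})))"
proof -
  \<comment> \<open>The hypotheses on \<open>d\<close> only ensure that \<open>y\<close> is defined on every index set involved;
    here \<open>y\<close> is total.\<close>
  interpret flat_basis n e y I
    using assms(3-7) by unfold_locales simp_all
  have "\<exists>T. (\<forall>v \<in> colspace n e y. T v \<in> colspace n e y) \<and>
        (\<forall>u \<in> colspace n e y. \<forall>v \<in> colspace n e y. T (u + v) = T u + T v) \<and>
        (\<forall>c. \<forall>v \<in> colspace n e y. T (scl c v) = scl c (T v)) \<and>
        (\<forall>B \<in> I. T (colvec n e y B) = colvec n e y (B \<union> {i})) \<and>
        (\<forall>A \<in> Vset n (e + 1). T (colvec n e y A) = colvec n e y (A \<union> {i}))"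
    if i: "i \<in> {1..n}" for i
  proof -
    obtain T where T: "Vector_Spaces.linear scl scl T" "T ` colspace n e y \<subseteq> colspace n e y"
      "\<And>A. A \<in> Vset n (Suc e) \<Longrightarrow> T (colvec n e y A) = colvec n e y (A \<union> {i})"
      using shift_operator_exists[OF i] by blast
    moreover have "\<forall>B \<in> I. T (colvec n e y B) = colvec n e y (B \<union> {i})"
      using T(3) basis_index Vset_mono[of e "Suc e" n] by auto
    ultimately show ?thesis
      by (intro exI[of _ T]) (auto simp: Vector_Spaces.linear_iff)
  qed
  then show ?thesis
    using colvec_in_colspace_Vset_Suc by simp
qed

end
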